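(* Let $n\ge 2$. The completely isolated subsemigroups of $\mathcal{PI}^{\ast}_n$ are exactly $\mathcal{PI}^{\ast}_n$, $\mathcal{S}_n$ and $\mathcal{PI}^{\ast}_n\setminus\mathcal{S}_n$.
   Context: Let $X=\{1,\dots,n\}$, $X'=\{1',\dots,n'\}$. $\mathcal{PI}^{\ast}_n$ is the set of partitions of $X\cup X'$ each of whose blocks is a singleton (point) or a generalised line (a set meeting both $X$ and $X'$), with product $\star$: with $X''$ a third copy of $X$, regard $\alpha$ as a partition of $X\cup X''$ and $\beta$ as a partition of $X''\cup X'$, let $\sim$ be the equivalence on $X\cup X''\cup X'$ generated by the blocks of both; $\alpha\star\beta$ is the partition of $X\cup X'$ in which distinct $u,v$ are in one block iff $u\sim v$ and the $\sim$-class of $u$ contains no singleton block of $\alpha$ or $\beta$. $\mathcal{S}_n$ is its group of units: elements all of whose blocks are $\{x,\pi(x)'\}$ for a permutation $\pi$. A subsemigroup $T$ of a semigroup $S$ is completely isolated if for all $a,b\in S$, $ab\in T$ implies $a\in T$ or $b\in T$. *)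

theory Defs
  imports Main
begin

text \<open>Points of X \<union> X': Inl i stands for i, Inr i stands for i'.\<close>
type_synonym pt = "nat + nat"

definition carrierX :: "nat \<Rightarrow> pt set" where
  "carrierX n = Inl ` {1..n} \<union> Inr ` {1..n}"

definition is_partition :: "'a set \<Rightarrow> 'a set set \<Rightarrow> bool" where
  "is_partition U P \<longleftrightarrow> (\<forall>A\<in>P. A \<noteq> {}) \<and> (\<forall>A\<in>P. \<forall>B\<in>P. A \<noteq> B \<longrightarrow> A \<inter> B = {}) \<and> \<Union>P = U"

definition PIstar :: "nat \<Rightarrow> pt set set set" where
  "PIstar n = {P. is_partition (carrierX n) P \<and>
     (\<forall>A\<in>P. (\<exists>x. A = {x}) \<or> (A \<inter> range Inl \<noteq> {} \<and> A \<inter> range Inr \<noteq> {}))}"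

definition Sn :: "nat \<Rightarrow> pt set set set" where
  "Sn n = {P. \<exists>\<pi>. bij_betw \<pi> {1..n} {1..n} \<and> P = (\<lambda>x. {Inl x, Inr (\<pi> x)}) ` {1..n}}"

text \<open>Three copies X, X'', X' for the product.\<close>
datatype tri = Tp nat | Md nat | Bt nat

fun liftTop :: "pt \<Rightarrow> tri" where
  "liftTop (Inl i) = Tp i" | "liftTop (Inr i) = Md i"
fun liftBot :: "pt \<Rightarrow> tri" where
  "liftBot (Inl i) = Md i" | "liftBot (Inr i) = Bt i"
fun outer :: "pt \<Rightarrow> tri" where
  "outer (Inl i) = Tp i" | "outer (Inr i) = Bt i"

definition allBlocks :: "pt set set \<Rightarrow> pt set set \<Rightarrow> tri set set" where
  "allBlocks \<alpha> \<beta> = (image liftTop ` \<alpha>) \<union> (image liftBot ` \<beta>)"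

definition simrel :: "pt set set \<Rightarrow> pt set set \<Rightarrow> (tri \<times> tri) set" where
  "simrel \<alpha> \<beta> = {(u, v). \<exists>A\<in>allBlocks \<alpha> \<beta>. u \<in> A \<and> v \<in> A}\<^sup>*"

definition badpt :: "pt set set \<Rightarrow> pt set set \<Rightarrow> pt \<Rightarrow> bool" where
  "badpt \<alpha> \<beta> u \<longleftrightarrow> (\<exists>A\<in>allBlocks \<alpha> \<beta>. (\<exists>x. A = {x}) \<and> (\<forall>p\<in>A. (outer u, p) \<in> simrel \<alpha> \<beta>))"

definition star :: "nat \<Rightarrow> pt set set \<Rightarrow> pt set set \<Rightarrow> pt set set" where
  "star n \<alpha> \<beta> = (\<lambda>u. if badpt \<alpha> \<beta> u then {u}
       else {v \<in> carrierX n. (outer u, outer v) \<in> simrel \<alpha> \<beta>}) ` carrierX n"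

definition completely_isolated :: "'a set \<Rightarrow> ('a \<Rightarrow> 'a \<Rightarrow> 'a) \<Rightarrow> 'a set \<Rightarrow> bool" where
  "completely_isolated S f T \<longleftrightarrow>
     T \<noteq> {} \<and> T \<subseteq> S \<and> (\<forall>a\<in>T. \<forall>b\<in>T. f a b \<in> T) \<and>
     (\<forall>a\<in>S. \<forall>b\<in>S. f a b \<in> T \<longrightarrow> a \<in> T \<or> b \<in> T)"

end

theory Submission
  imports Defs "HOL-Combinatorics.Permutations"
begin

text \<open>
  The units \<open>Sn n\<close> form a completely isolated subsemigroup because \<open>\<alpha> \<star> \<beta>\<close> can only be a unit
  if \<open>\<alpha>\<close> is one: no top point of \<open>\<alpha>\<close> may become a point, and top points in a common block of
  \<open>\<alpha>\<close> stay together in \<open>\<alpha> \<star> \<beta>\<close>.  As \<open>Sn n\<close> is closed under \<open>\<star>\<close>, its complement is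
  completely isolated as well.

  Conversely, if \<open>T \<noteq> PIstar n\<close> is completely isolated, then \<open>T\<close> and its complement are both
  closed under \<open>\<star>\<close>.  Transpositions are involutions, so all units lie on the side of the
  identity, and relabelling by a unit preserves each side.  On the side \<open>X\<close> of the partition
  into points, induction on the number of lines shows that every nonunit lies in \<open>X\<close>: a nonunit
  with a point loses a line when multiplied by a suitable relabelling of itself, and a nonunit
  without points is the product of two nonunits with points and no more lines.  Hence the
  other side is \<open>Sn n\<close>.
\<close>

subsection \<open>The relation \<open>\<sim>\<close> and the blocks of a product\<close>

lemma simrel_refl [simp]: "(u, u) \<in> simrel \<alpha> \<beta>"
  by (simp add: simrel_def)

lemma simrel_sym: "(u, v) \<in> simrel \<alpha> \<beta> \<Longrightarrow> (v, u) \<in> simrel \<alpha> \<beta>"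
  unfolding simrel_def by (rule symD[OF sym_rtrancl]) (auto simp: sym_def)

lemma simrel_trans: "(u, v) \<in> simrel \<alpha> \<beta> \<Longrightarrow> (v, w) \<in> simrel \<alpha> \<beta> \<Longrightarrow> (u, w) \<in> simrel \<alpha> \<beta>"
  unfolding simrel_def by (rule rtrancl_trans)

lemma simrel_allBlocks: "A \<in> allBlocks \<alpha> \<beta> \<Longrightarrow> u \<in> A \<Longrightarrow> v \<in> A \<Longrightarrow> (u, v) \<in> simrel \<alpha> \<beta>"
  unfolding simrel_def by blast

lemma simrel_liftTop: "A \<in> \<alpha> \<Longrightarrow> p \<in> A \<Longrightarrow> q \<in> A \<Longrightarrow> (liftTop p, liftTop q) \<in> simrel \<alpha> \<beta>"
  by (rule simrel_allBlocks[of "liftTop ` A"]) (auto simp: allBlocks_def)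

lemma simrel_liftBot: "B \<in> \<beta> \<Longrightarrow> p \<in> B \<Longrightarrow> q \<in> B \<Longrightarrow> (liftBot p, liftBot q) \<in> simrel \<alpha> \<beta>"
  by (rule simrel_allBlocks[of "liftBot ` B"]) (auto simp: allBlocks_def)

lemma simrel_closed:
  assumes closed: "\<And>A. A \<in> allBlocks \<alpha> \<beta> \<Longrightarrow> A \<inter> C \<noteq> {} \<Longrightarrow> A \<subseteq> C"
    and "(u, v) \<in> simrel \<alpha> \<beta>" and "u \<in> C"
  shows "v \<in> C"
  using assms(2,3) unfolding simrel_def
proof (induction rule: rtrancl_induct)
  case (step y z)
  then show ?case using closed by blast
qed

lemma inj_liftTop: "inj liftTop"
  by (rule injI) (auto elim: liftTop.elims)

lemma inj_liftBot: "inj liftBot"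
  by (rule injI) (auto elim: liftBot.elims)

lemma badpt_liftTopI: "{p} \<in> \<alpha> \<Longrightarrow> (outer u, liftTop p) \<in> simrel \<alpha> \<beta> \<Longrightarrow> badpt \<alpha> \<beta> u"
  unfolding badpt_def allBlocks_def by (intro bexI[of _ "{liftTop p}"]) auto

lemma badpt_liftBotI: "{p} \<in> \<beta> \<Longrightarrow> (outer u, liftBot p) \<in> simrel \<alpha> \<beta> \<Longrightarrow> badpt \<alpha> \<beta> u"
  unfolding badpt_def allBlocks_def by (intro bexI[of _ "{liftBot p}"]) auto

lemma badpt_simrel: "(outer u, outer v) \<in> simrel \<alpha> \<beta> \<Longrightarrow> badpt \<alpha> \<beta> u \<Longrightarrow> badpt \<alpha> \<beta> v"
  unfolding badpt_def by (meson simrel_sym simrel_trans)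

definition star_block :: "nat \<Rightarrow> pt set set \<Rightarrow> pt set set \<Rightarrow> pt \<Rightarrow> pt set" where
  "star_block n \<alpha> \<beta> u =
     (if badpt \<alpha> \<beta> u then {u} else {v \<in> carrierX n. (outer u, outer v) \<in> simrel \<alpha> \<beta>})"

lemma star_eq_image_star_block: "star n \<alpha> \<beta> = star_block n \<alpha> \<beta> ` carrierX n"
  by (simp add: star_def star_block_def)

lemma self_in_star_block: "u \<in> carrierX n \<Longrightarrow> u \<in> star_block n \<alpha> \<beta> u"
  by (simp add: star_block_def)

lemma star_block_subset: "u \<in> carrierX n \<Longrightarrow> star_block n \<alpha> \<beta> u \<subseteq> carrierX n"
  by (auto simp: star_block_def)

lemma star_block_eq: "v \<in> star_block n \<alpha> \<beta> u \<Longrightarrow> star_block n \<alpha> \<beta> v = star_block n \<alpha> \<beta> u"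
  by (cases "badpt \<alpha> \<beta> u")
    (auto simp: star_block_def dest: badpt_simrel simrel_sym intro: simrel_trans)

lemma in_star_blockI:
  "\<not> badpt \<alpha> \<beta> u \<Longrightarrow> v \<in> carrierX n \<Longrightarrow> (outer u, outer v) \<in> simrel \<alpha> \<beta> \<Longrightarrow> v \<in> star_block n \<alpha> \<beta> u"
  by (simp add: star_block_def)

lemma carrierX_simps [simp]:
  "Inl x \<in> carrierX n \<longleftrightarrow> x \<in> {1..n}" "Inr x \<in> carrierX n \<longleftrightarrow> x \<in> {1..n}"
  by (auto simp: carrierX_def)

lemma finite_carrierX: "finite (carrierX n)"
  by (simp add: carrierX_def)

lemma PIstarI:
  assumes blocks: "\<And>A. A \<in> P \<Longrightarrow> A \<noteq> {} \<and> A \<subseteq> carrierX n"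
    and cover: "\<And>p. p \<in> carrierX n \<Longrightarrow> \<exists>A\<in>P. p \<in> A"
    and unique: "\<And>A B p. A \<in> P \<Longrightarrow> B \<in> P \<Longrightarrow> p \<in> A \<Longrightarrow> p \<in> B \<Longrightarrow> A = B"
    and shape: "\<And>A. A \<in> P \<Longrightarrow> (\<exists>x. A = {x}) \<or> (A \<inter> range Inl \<noteq> {} \<and> A \<inter> range Inr \<noteq> {})"
  shows "P \<in> PIstar n"
proof -
  have "\<Union>P = carrierX n" using blocks cover by blast
  moreover have "\<forall>A\<in>P. \<forall>B\<in>P. A \<noteq> B \<longrightarrow> A \<inter> B = {}" using unique by blast
  ultimately show ?thesis using blocks shape by (simp add: PIstar_def is_partition_def)
qed

lemma PIstar_cover: "a \<in> PIstar n \<Longrightarrow> p \<in> carrierX n \<Longrightarrow> \<exists>A\<in>a. p \<in> A"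
  by (auto simp: PIstar_def is_partition_def)

lemma PIstar_block_unique: "a \<in> PIstar n \<Longrightarrow> A \<in> a \<Longrightarrow> B \<in> a \<Longrightarrow> p \<in> A \<Longrightarrow> p \<in> B \<Longrightarrow> A = B"
  by (auto simp: PIstar_def is_partition_def)

lemma PIstar_block_subset: "a \<in> PIstar n \<Longrightarrow> A \<in> a \<Longrightarrow> A \<subseteq> carrierX n"
  by (auto simp: PIstar_def is_partition_def)

lemma PIstar_block_nonempty: "a \<in> PIstar n \<Longrightarrow> A \<in> a \<Longrightarrow> A \<noteq> {}"
  by (auto simp: PIstar_def is_partition_def)

lemma PIstar_line:
  assumes "a \<in> PIstar n" "A \<in> a" "\<nexists>x. A = {x}"
  obtains i j where "Inl i \<in> A" "Inr j \<in> A"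
  using assms unfolding PIstar_def by blast

lemma PIstar_block_of_nonsingleton:
  assumes "a \<in> PIstar n" "p \<in> carrierX n" "{p} \<notin> a"
  obtains A i j where "A \<in> a" "p \<in> A" "Inl i \<in> A" "Inr j \<in> A"
proof -
  obtain A where A: "A \<in> a" "p \<in> A" using PIstar_cover assms by blast
  with assms(3) have "\<nexists>x. A = {x}" by auto
  with assms(1) A show thesis using that PIstar_line by metis
qed

lemma PIstar_subset_eq:
  assumes a: "a \<in> PIstar n" and b: "b \<in> PIstar n" and sub: "b \<subseteq> a"
  shows "b = a"
proof
  show "a \<subseteq> b"
  proof
    fix A assume A: "A \<in> a"
    obtain p where p: "p \<in> A" using PIstar_block_nonempty[OF a A] by blast
    then have "p \<in> carrierX n" using PIstar_block_subset[OF a A] by blast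
    then obtain B where "B \<in> b" "p \<in> B" using PIstar_cover[OF b] by blast
    then show "A \<in> b" using PIstar_block_unique[OF a A _ p] sub by blast
  qed
qed (rule sub)

lemma finite_PIstar: "a \<in> PIstar n \<Longrightarrow> finite a"
  using finite_carrierX PIstar_block_subset by (metis Pow_iff finite_Pow_iff finite_subset subsetI)

lemma star_block_meets_both_sides:
  assumes \<alpha>: "\<alpha> \<in> PIstar n" and \<beta>: "\<beta> \<in> PIstar n" and u: "u \<in> carrierX n"
    and good: "\<not> badpt \<alpha> \<beta> u"
  shows "\<exists>i j. Inl i \<in> star_block n \<alpha> \<beta> u \<and> Inr j \<in> star_block n \<alpha> \<beta> u"
proof (cases u)
  case (Inl i)
  have "{Inl i} \<notin> \<alpha>" using good badpt_liftTopI[of "Inl i" \<alpha> u \<beta>] Inl by auto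
  then obtain A i' j where A: "A \<in> \<alpha>" "Inl i \<in> A" "Inl i' \<in> A" "Inr j \<in> A"
    using PIstar_block_of_nonsingleton[OF \<alpha>, of "Inl i"] u Inl by blast
  have uj: "(outer u, Md j) \<in> simrel \<alpha> \<beta>" using simrel_liftTop[OF A(1,2,4)] Inl by simp
  have j: "Inl j \<in> carrierX n" using PIstar_block_subset[OF \<alpha> A(1)] A(4) by auto
  have "{Inl j} \<notin> \<beta>" using good badpt_liftBotI[of "Inl j" \<beta> u \<alpha>] uj by auto
  then obtain B i' k where B: "B \<in> \<beta>" "Inl j \<in> B" "Inl i' \<in> B" "Inr k \<in> B"
    using j PIstar_block_of_nonsingleton[OF \<beta>] by blast
  have "(Md j, Bt k) \<in> simrel \<alpha> \<beta>" using simrel_liftBot[OF B(1,2,4), of \<alpha>] by simp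
  with uj have "(outer u, Bt k) \<in> simrel \<alpha> \<beta>" by (rule simrel_trans)
  moreover have "Inr k \<in> carrierX n" using PIstar_block_subset[OF \<beta> B(1)] B(4) by auto
  ultimately have "Inr k \<in> star_block n \<alpha> \<beta> u" using in_star_blockI[OF good] by simp
  then show ?thesis using self_in_star_block[OF u] Inl by blast
next
  case (Inr k)
  have "{Inr k} \<notin> \<beta>" using good badpt_liftBotI[of "Inr k" \<beta> u \<alpha>] Inr by auto
  then obtain B j k' where B: "B \<in> \<beta>" "Inr k \<in> B" "Inl j \<in> B" "Inr k' \<in> B"
    using PIstar_block_of_nonsingleton[OF \<beta>, of "Inr k"] u Inr by blast
  have uj: "(outer u, Md j) \<in> simrel \<alpha> \<beta>" using simrel_liftBot[OF B(1-3)] Inr by simp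
  have j: "Inr j \<in> carrierX n" using PIstar_block_subset[OF \<beta> B(1)] B(3) by auto
  have "{Inr j} \<notin> \<alpha>" using good badpt_liftTopI[of "Inr j" \<alpha> u \<beta>] uj by auto
  then obtain A i j' where A: "A \<in> \<alpha>" "Inr j \<in> A" "Inl i \<in> A" "Inr j' \<in> A"
    using j PIstar_block_of_nonsingleton[OF \<alpha>] by blast
  have "(Md j, Tp i) \<in> simrel \<alpha> \<beta>" using simrel_liftTop[OF A(1-3), of \<beta>] by simp
  with uj have "(outer u, Tp i) \<in> simrel \<alpha> \<beta>" by (rule simrel_trans)
  moreover have "Inl i \<in> carrierX n" using PIstar_block_subset[OF \<alpha> A(1)] A(3) by auto
  ultimately have "Inl i \<in> star_block n \<alpha> \<beta> u" using in_star_blockI[OF good] by simp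
  then show ?thesis using self_in_star_block[OF u] Inr by blast
qed

lemma star_in_PIstar:
  assumes "\<alpha> \<in> PIstar n" "\<beta> \<in> PIstar n"
  shows "star n \<alpha> \<beta> \<in> PIstar n"
  unfolding star_eq_image_star_block
proof (rule PIstarI)
  fix A B p
  assume "A \<in> star_block n \<alpha> \<beta> ` carrierX n" "B \<in> star_block n \<alpha> \<beta> ` carrierX n" "p \<in> A" "p \<in> B"
  then show "A = B" by (metis imageE star_block_eq)
next
  fix A assume "A \<in> star_block n \<alpha> \<beta> ` carrierX n"
  then obtain u where u: "u \<in> carrierX n" "A = star_block n \<alpha> \<beta> u" by blast
  show "(\<exists>x. A = {x}) \<or> (A \<inter> range Inl \<noteq> {} \<and> A \<inter> range Inr \<noteq> {})"
  proof (cases "badpt \<alpha> \<beta> u")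
    case True
    then show ?thesis using u by (simp add: star_block_def)
  next
    case False
    then show ?thesis using star_block_meets_both_sides[OF assms u(1)] u(2) by blast
  qed
qed (use self_in_star_block star_block_subset in blast)+

lemma liftTop_eq_liftBot_iff: "liftTop p = liftBot q \<longleftrightarrow> (\<exists>k. p = Inr k \<and> q = Inl k)"
  by (cases p; cases q) auto

lemma Tp_in_liftTop_image [simp]: "Tp x \<in> liftTop ` P \<longleftrightarrow> Inl x \<in> P"
  by (auto simp: image_iff elim: liftTop.elims[OF sym]) (metis liftTop.simps(1))

lemma Bt_in_liftBot_image [simp]: "Bt j \<in> liftBot ` Q \<longleftrightarrow> Inr j \<in> Q"
  by (auto simp: image_iff elim: liftBot.elims[OF sym]) (metis liftBot.simps(2))

lemma Tp_notin_liftBot_image [simp]: "Tp x \<notin> liftBot ` Q"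
  by (auto elim: liftBot.elims[OF sym])

lemma Bt_notin_liftTop_image [simp]: "Bt j \<notin> liftTop ` P"
  by (auto elim: liftTop.elims[OF sym])

lemma inj_image_eq_singleton:
  assumes "inj f" "f ` A = {x}"
  shows "\<exists>a. A = {a}"
proof -
  obtain a where "a \<in> A" using assms(2) by blast
  then have "f ` A = f ` {a}" using assms(2) by auto
  then have "A = {a}" using assms(1) by (simp only: inj_image_eq_iff)
  then show ?thesis ..
qed

text \<open>A block \<open>Q\<close> of \<open>\<beta>\<close>, together with the blocks \<open>\<P>\<close> of \<open>\<alpha>\<close> glued to it along
  the middle row \<open>X''\<close>, forms a whole \<open>\<sim>\<close>-class.\<close>

context
  fixes n \<alpha> \<beta> Q \<P>
  assumes \<alpha>: "\<alpha> \<in> PIstar n" and \<beta>: "\<beta> \<in> PIstar n" and Q: "Q \<in> \<beta>" and \<P>: "\<P> \<subseteq> \<alpha>"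
    and middle: "\<And>P k. P \<in> \<P> \<Longrightarrow> Inr k \<in> P \<Longrightarrow> Inl k \<in> Q"
    and attached: "\<And>P. P \<in> \<P> \<Longrightarrow> \<exists>k. Inr k \<in> P"
    and covered: "\<And>k. Inl k \<in> Q \<Longrightarrow> \<exists>P\<in>\<P>. Inr k \<in> P"
begin

lemma allBlocks_meeting_glued:
  assumes A: "A \<in> allBlocks \<alpha> \<beta>" and meets: "A \<inter> (liftBot ` Q \<union> (\<Union>P\<in>\<P>. liftTop ` P)) \<noteq> {}"
  shows "A = liftBot ` Q \<or> (\<exists>P\<in>\<P>. A = liftTop ` P)"
  using A unfolding allBlocks_def
proof (elim UnE imageE)
  fix P' assume P': "P' \<in> \<alpha>" "A = liftTop ` P'"
  from meets obtain x where "x \<in> liftTop ` P'" "x \<in> liftBot ` Q \<union> (\<Union>P\<in>\<P>. liftTop ` P)"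
    unfolding P'(2) ex_in_conv[symmetric] by blast
  then obtain p where p: "p \<in> P'" "liftTop p \<in> liftBot ` Q \<union> (\<Union>P\<in>\<P>. liftTop ` P)" by blast
  have "\<exists>P\<in>\<P>. p \<in> P"
  proof (cases "liftTop p \<in> liftBot ` Q")
    case True
    then obtain k where "p = Inr k" "Inl k \<in> Q" by (auto simp: liftTop_eq_liftBot_iff)
    then show ?thesis using covered by blast
  next
    case False
    then show ?thesis using p(2) by (auto simp: inj_image_mem_iff[OF inj_liftTop])
  qed
  then obtain P where "P \<in> \<P>" "p \<in> P" by blast
  then show ?thesis using PIstar_block_unique[OF \<alpha> P'(1) _ p(1)] \<P> P'(2) by blast
next
  fix Q' assume Q': "Q' \<in> \<beta>" "A = liftBot ` Q'"
  from meets obtain x where "x \<in> liftBot ` Q'" "x \<in> liftBot ` Q \<union> (\<Union>P\<in>\<P>. liftTop ` P)"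
    unfolding Q'(2) ex_in_conv[symmetric] by blast
  then obtain q where q: "q \<in> Q'" "liftBot q \<in> liftBot ` Q \<union> (\<Union>P\<in>\<P>. liftTop ` P)" by blast
  have "q \<in> Q"
  proof (cases "liftBot q \<in> liftBot ` Q")
    case True
    then show ?thesis by (simp add: inj_image_mem_iff[OF inj_liftBot])
  next
    case False
    then obtain P p where "P \<in> \<P>" "p \<in> P" "liftTop p = liftBot q" using q(2) by auto
    then show ?thesis using middle by (auto simp: liftTop_eq_liftBot_iff)
  qed
  then show ?thesis using PIstar_block_unique[OF \<beta> Q'(1) Q q(1)] Q'(2) by blast
qed

lemma simrel_glued_iff:
  assumes c: "c \<in> liftBot ` Q \<union> (\<Union>P\<in>\<P>. liftTop ` P)"
  shows "(c, d) \<in> simrel \<alpha> \<beta> \<longleftrightarrow> d \<in> liftBot ` Q \<union> (\<Union>P\<in>\<P>. liftTop ` P)"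
proof
  assume cd: "(c, d) \<in> simrel \<alpha> \<beta>"
  show "d \<in> liftBot ` Q \<union> (\<Union>P\<in>\<P>. liftTop ` P)"
  proof (rule simrel_closed[OF _ cd c])
    fix A assume "A \<in> allBlocks \<alpha> \<beta>" "A \<inter> (liftBot ` Q \<union> (\<Union>P\<in>\<P>. liftTop ` P)) \<noteq> {}"
    from allBlocks_meeting_glued[OF this]
    show "A \<subseteq> liftBot ` Q \<union> (\<Union>P\<in>\<P>. liftTop ` P)" by blast
  qed
next
  obtain q0 where q0: "q0 \<in> Q" using PIstar_block_nonempty[OF \<beta> Q] by blast
  have hub: "(liftBot q0, e) \<in> simrel \<alpha> \<beta>" if "e \<in> liftBot ` Q \<union> (\<Union>P\<in>\<P>. liftTop ` P)" for e
    using that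
  proof (elim UnE UN_E imageE)
    fix q assume "q \<in> Q" "e = liftBot q"
    then show ?thesis using simrel_liftBot[OF Q q0] by simp
  next
    fix P p assume P: "P \<in> \<P>" and p: "p \<in> P" "e = liftTop p"
    obtain k where k: "Inr k \<in> P" using attached[OF P] by blast
    have "(liftBot q0, liftBot (Inl k)) \<in> simrel \<alpha> \<beta>"
      using simrel_liftBot[OF Q q0 middle[OF P k]] .
    moreover have "(liftTop (Inr k), liftTop p) \<in> simrel \<alpha> \<beta>"
      using simrel_liftTop[OF _ k p(1)] P \<P> by blast
    ultimately show ?thesis using p(2) by (auto intro: simrel_trans)
  qed
  assume "d \<in> liftBot ` Q \<union> (\<Union>P\<in>\<P>. liftTop ` P)"
  then show "(c, d) \<in> simrel \<alpha> \<beta>" using simrel_trans[OF simrel_sym[OF hub[OF c]] hub] by blast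
qed

lemma outer_in_glued_iff:
  "outer v \<in> liftBot ` Q \<union> (\<Union>P\<in>\<P>. liftTop ` P) \<longleftrightarrow> v \<in> \<Union>\<P> \<inter> range Inl \<union> Q \<inter> range Inr"
  by (cases v) auto

lemma badpt_glued_iff:
  assumes u: "u \<in> \<Union>\<P> \<inter> range Inl \<union> Q \<inter> range Inr"
  shows "badpt \<alpha> \<beta> u \<longleftrightarrow> (\<exists>q. Q = {q}) \<or> (\<exists>P\<in>\<P>. \<exists>p. P = {p})"
proof -
  let ?C = "liftBot ` Q \<union> (\<Union>P\<in>\<P>. liftTop ` P)"
  have uC: "outer u \<in> ?C" using u by (simp only: outer_in_glued_iff)
  have "badpt \<alpha> \<beta> u \<longleftrightarrow> (\<exists>A\<in>allBlocks \<alpha> \<beta>. (\<exists>x. A = {x}) \<and> A \<subseteq> ?C)"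
    unfolding badpt_def simrel_glued_iff[OF uC] by (simp add: subset_eq)
  also have "\<dots> \<longleftrightarrow> (\<exists>q. Q = {q}) \<or> (\<exists>P\<in>\<P>. \<exists>p. P = {p})"
  proof
    assume "\<exists>A\<in>allBlocks \<alpha> \<beta>. (\<exists>x. A = {x}) \<and> A \<subseteq> ?C"
    then obtain A x where A: "A \<in> allBlocks \<alpha> \<beta>" "A = {x}" "A \<subseteq> ?C" by blast
    then have "A \<inter> ?C \<noteq> {}" unfolding Int_absorb2[OF A(3)] by simp
    from allBlocks_meeting_glued[OF A(1) this]
    have "{x} = liftBot ` Q \<or> (\<exists>P\<in>\<P>. {x} = liftTop ` P)" unfolding A(2) .
    then show "(\<exists>q. Q = {q}) \<or> (\<exists>P\<in>\<P>. \<exists>p. P = {p})"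
      using inj_image_eq_singleton[OF inj_liftBot] inj_image_eq_singleton[OF inj_liftTop] by metis
  next
    assume "(\<exists>q. Q = {q}) \<or> (\<exists>P\<in>\<P>. \<exists>p. P = {p})"
    then show "\<exists>A\<in>allBlocks \<alpha> \<beta>. (\<exists>x. A = {x}) \<and> A \<subseteq> ?C"
    proof (elim disjE bexE exE)
      fix q assume "Q = {q}"
      moreover have "liftBot ` Q \<in> allBlocks \<alpha> \<beta>" using Q by (simp add: allBlocks_def)
      ultimately show ?thesis by auto
    next
      fix P p assume "P \<in> \<P>" "P = {p}"
      moreover have "liftTop ` P \<in> allBlocks \<alpha> \<beta>" using \<P> \<open>P \<in> \<P>\<close> by (auto simp: allBlocks_def)
      ultimately show ?thesis by auto
    qed
  qed
  finally show ?thesis .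
qed

lemma star_block_glued:
  assumes u: "u \<in> \<Union>\<P> \<inter> range Inl \<union> Q \<inter> range Inr"
  shows "star_block n \<alpha> \<beta> u =
    (if (\<exists>q. Q = {q}) \<or> (\<exists>P\<in>\<P>. \<exists>p. P = {p}) then {u} else \<Union>\<P> \<inter> range Inl \<union> Q \<inter> range Inr)"
proof -
  have uC: "outer u \<in> liftBot ` Q \<union> (\<Union>P\<in>\<P>. liftTop ` P)" using u by (simp only: outer_in_glued_iff)
  have "\<Union>\<P> \<subseteq> carrierX n" using \<P> PIstar_block_subset[OF \<alpha>] by blast
  moreover have "Q \<subseteq> carrierX n" using PIstar_block_subset[OF \<beta> Q] .
  ultimately have "{v \<in> carrierX n. (outer u, outer v) \<in> simrel \<alpha> \<beta>} = \<Union>\<P> \<inter> range Inl \<union> Q \<inter> range Inr"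
    unfolding simrel_glued_iff[OF uC] outer_in_glued_iff by blast
  then show ?thesis using badpt_glued_iff[OF u] by (simp add: star_block_def)
qed

end

subsection \<open>Units and relabelling\<close>

definition perm_elem :: "nat \<Rightarrow> (nat \<Rightarrow> nat) \<Rightarrow> pt set set" where
  "perm_elem n \<pi> = (\<lambda>x. {Inl x, Inr (\<pi> x)}) ` {1..n}"

text \<open>\<open>relabel n \<pi> a\<close> is the product \<open>perm_elem n \<pi> \<star> a\<close> (lemma \<open>star_perm_elem_left\<close>),
  written as the pull-back of \<open>a\<close> along \<open>\<pi>\<close> acting on \<open>X\<close>.\<close>

definition relabel :: "nat \<Rightarrow> (nat \<Rightarrow> nat) \<Rightarrow> pt set set \<Rightarrow> pt set set" where
  "relabel n \<pi> a = (\<lambda>A. {p \<in> carrierX n. map_sum \<pi> id p \<in> A}) ` a"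

lemma map_sum_id_eq_case: "map_sum \<pi> id p = (case p of Inl x \<Rightarrow> Inl (\<pi> x) | Inr j \<Rightarrow> Inr j)"
  by (cases p) simp_all

lemma Sn_eq: "Sn n = {perm_elem n \<pi> |\<pi>. bij_betw \<pi> {1..n} {1..n}}"
  by (auto simp: Sn_def perm_elem_def)

lemma perm_elem_cong: "(\<And>x. x \<in> {1..n} \<Longrightarrow> \<pi> x = \<sigma> x) \<Longrightarrow> perm_elem n \<pi> = perm_elem n \<sigma>"
  unfolding perm_elem_def by (rule image_cong) auto

lemma bij_betw_map_sum_carrierX:
  assumes "bij_betw \<pi> {1..n} {1..n}"
  shows "bij_betw (map_sum \<pi> id) (carrierX n) (carrierX n)"
proof -
  have "inj_on (map_sum \<pi> id) (carrierX n)"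
  proof (rule inj_onI)
    fix p q assume "p \<in> carrierX n" "q \<in> carrierX n" "map_sum \<pi> id p = map_sum \<pi> id q"
    then show "p = q" using bij_betw_imp_inj_on[OF assms] by (cases p; cases q) (auto dest: inj_onD)
  qed
  moreover have "map_sum \<pi> id ` carrierX n = (\<lambda>x. Inl (\<pi> x)) ` {1..n} \<union> Inr ` {1..n}"
    by (simp add: carrierX_def image_Un image_image)
  then have "map_sum \<pi> id ` carrierX n = carrierX n"
    using bij_betw_imp_surj_on[OF assms] by (simp add: carrierX_def image_image[of Inl \<pi>, symmetric])
  ultimately show ?thesis by (simp add: bij_betw_def)
qed

lemma perm_elem_in_PIstar:
  assumes \<pi>: "bij_betw \<pi> {1..n} {1..n}"
  shows "perm_elem n \<pi> \<in> PIstar n"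
proof (rule PIstarI)
  fix A assume "A \<in> perm_elem n \<pi>"
  then show "A \<noteq> {} \<and> A \<subseteq> carrierX n"
    using bij_betwE[OF \<pi>] by (auto simp: perm_elem_def)
next
  fix p assume "p \<in> carrierX n"
  then show "\<exists>A\<in>perm_elem n \<pi>. p \<in> A"
    using bij_betw_imp_surj_on[OF \<pi>] by (cases p) (auto simp: perm_elem_def)
next
  fix A B p assume "A \<in> perm_elem n \<pi>" "B \<in> perm_elem n \<pi>" "p \<in> A" "p \<in> B"
  then show "A = B"
    using bij_betw_imp_inj_on[OF \<pi>] by (auto simp: perm_elem_def dest: inj_onD)
qed (auto simp: perm_elem_def)

lemma perm_elem_in_Sn: "bij_betw \<pi> {1..n} {1..n} \<Longrightarrow> perm_elem n \<pi> \<in> Sn n"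
  by (auto simp: Sn_eq)

lemma Sn_subset_PIstar: "Sn n \<subseteq> PIstar n"
  using perm_elem_in_PIstar by (auto simp: Sn_eq)

lemma Sn_singleton_free: "a \<in> Sn n \<Longrightarrow> {p} \<notin> a"
  by (auto simp: Sn_def doubleton_eq_iff)

lemma Sn_block_top_unique: "a \<in> Sn n \<Longrightarrow> B \<in> a \<Longrightarrow> Inl x \<in> B \<Longrightarrow> Inl y \<in> B \<Longrightarrow> x = y"
  by (auto simp: Sn_def)

lemma star_block_perm_elem:
  assumes \<pi>: "bij_betw \<pi> {1..n} {1..n}" and a: "a \<in> PIstar n" and A: "A \<in> a"
    and u: "u \<in> carrierX n" "map_sum \<pi> id u \<in> A"
  shows "star_block n (perm_elem n \<pi>) a u = {p \<in> carrierX n. map_sum \<pi> id p \<in> A}"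
proof -
  define \<P> where "\<P> = (\<lambda>x. {Inl x, Inr (\<pi> x)}) ` {x \<in> {1..n}. Inl (\<pi> x) \<in> A}"
  have A_sub: "A \<subseteq> carrierX n" using PIstar_block_subset[OF a A] .
  have glued: "\<Union>\<P> \<inter> range Inl \<union> A \<inter> range Inr = {p \<in> carrierX n. map_sum \<pi> id p \<in> A}"
  proof (rule set_eqI)
    fix p show "p \<in> \<Union>\<P> \<inter> range Inl \<union> A \<inter> range Inr \<longleftrightarrow> p \<in> {p \<in> carrierX n. map_sum \<pi> id p \<in> A}"
      using A_sub by (cases p) (auto simp: \<P>_def)
  qed
  have "star_block n (perm_elem n \<pi>) a u =
    (if (\<exists>q. A = {q}) \<or> (\<exists>P\<in>\<P>. \<exists>p. P = {p}) then {u} else \<Union>\<P> \<inter> range Inl \<union> A \<inter> range Inr)"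
  proof (rule star_block_glued[OF perm_elem_in_PIstar[OF \<pi>] a A])
    show "\<P> \<subseteq> perm_elem n \<pi>" by (auto simp: \<P>_def perm_elem_def)
    show "\<And>k. Inl k \<in> A \<Longrightarrow> \<exists>P\<in>\<P>. Inr k \<in> P"
    proof -
      fix k assume k: "Inl k \<in> A"
      then have "k \<in> \<pi> ` {1..n}" using A_sub bij_betw_imp_surj_on[OF \<pi>] by auto
      then show "\<exists>P\<in>\<P>. Inr k \<in> P" using k by (auto simp: \<P>_def)
    qed
    show "u \<in> \<Union>\<P> \<inter> range Inl \<union> A \<inter> range Inr" using u glued by blast
  qed (auto simp: \<P>_def)
  also have "\<dots> = {p \<in> carrierX n. map_sum \<pi> id p \<in> A}"
  proof (cases "\<exists>q. A = {q}")
    case True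
    then have "A = {map_sum \<pi> id u}" using u(2) by auto
    moreover have "inj_on (map_sum \<pi> id) (carrierX n)"
      using bij_betw_map_sum_carrierX[OF \<pi>] by (rule bij_betw_imp_inj_on)
    ultimately show ?thesis using True u(1) by (auto dest: inj_onD)
  next
    case False
    then show ?thesis using glued by (auto simp: \<P>_def)
  qed
  finally show ?thesis .
qed

lemma star_perm_elem_left:
  assumes \<pi>: "bij_betw \<pi> {1..n} {1..n}" and a: "a \<in> PIstar n"
  shows "star n (perm_elem n \<pi>) a = relabel n \<pi> a"
proof -
  have bij: "bij_betw (map_sum \<pi> id) (carrierX n) (carrierX n)" by (rule bij_betw_map_sum_carrierX[OF \<pi>])
  show ?thesis
  proof
    show "star n (perm_elem n \<pi>) a \<subseteq> relabel n \<pi> a"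
    proof
      fix B assume "B \<in> star n (perm_elem n \<pi>) a"
      then obtain u where u: "u \<in> carrierX n" "B = star_block n (perm_elem n \<pi>) a u"
        unfolding star_eq_image_star_block by blast
      obtain A where "A \<in> a" "map_sum \<pi> id u \<in> A" using PIstar_cover[OF a] bij_betwE[OF bij] u(1) by blast
      then show "B \<in> relabel n \<pi> a"
        using star_block_perm_elem[OF \<pi> a] u unfolding relabel_def by blast
    qed
  next
    show "relabel n \<pi> a \<subseteq> star n (perm_elem n \<pi>) a"
    proof
      fix B assume "B \<in> relabel n \<pi> a"
      then obtain A where A: "A \<in> a" "B = {p \<in> carrierX n. map_sum \<pi> id p \<in> A}"
        unfolding relabel_def by blast
      obtain q where q: "q \<in> A" using PIstar_block_nonempty[OF a A(1)] by blast
      then have "q \<in> map_sum \<pi> id ` carrierX n"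
        using PIstar_block_subset[OF a A(1)] bij_betw_imp_surj_on[OF bij] by blast
      then obtain u where "u \<in> carrierX n" "map_sum \<pi> id u \<in> A" using q by blast
      then show "B \<in> star n (perm_elem n \<pi>) a"
        using star_block_perm_elem[OF \<pi> a A(1)] A(2) unfolding star_eq_image_star_block by blast
    qed
  qed
qed

lemma relabel_block: "A \<in> a \<Longrightarrow> {p \<in> carrierX n. map_sum \<pi> id p \<in> A} \<in> relabel n \<pi> a"
  by (simp add: relabel_def)

lemma singleton_top_in_relabel:
  assumes "{Inl (\<pi> i)} \<in> a" and \<pi>: "bij_betw \<pi> {1..n} {1..n}" and i: "i \<in> {1..n}"
  shows "{Inl i} \<in> relabel n \<pi> a"
proof -
  have "{p \<in> carrierX n. map_sum \<pi> id p \<in> {Inl (\<pi> i)}} = {Inl i}"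
  proof (rule set_eqI)
    fix p show "p \<in> {p \<in> carrierX n. map_sum \<pi> id p \<in> {Inl (\<pi> i)}} \<longleftrightarrow> p \<in> {Inl i}"
      using i bij_betw_imp_inj_on[OF \<pi>] by (cases p) (auto dest: inj_onD)
  qed
  then show ?thesis using relabel_block[OF assms(1), of n \<pi>] by (simp only:)
qed

lemma relabel_comp:
  "\<sigma> ` {1..n} \<subseteq> {1..n} \<Longrightarrow> relabel n \<sigma> (relabel n \<pi> a) = relabel n (\<pi> \<circ> \<sigma>) a"
  unfolding relabel_def image_image
proof (rule image_cong)
  fix A assume "\<sigma> ` {1..n} \<subseteq> {1..n}"
  then show "{p \<in> carrierX n. map_sum \<sigma> id p \<in> {q \<in> carrierX n. map_sum \<pi> id q \<in> A}} =
    {p \<in> carrierX n. map_sum (\<pi> \<circ> \<sigma>) id p \<in> A}"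
    by (intro Collect_cong) (auto simp: map_sum_id_eq_case image_subset_iff split: sum.split)
qed simp

lemma relabel_cong: "(\<And>x. x \<in> {1..n} \<Longrightarrow> \<pi> x = \<sigma> x) \<Longrightarrow> relabel n \<pi> a = relabel n \<sigma> a"
  unfolding relabel_def
  by (intro image_cong Collect_cong) (auto simp: map_sum_id_eq_case split: sum.split)

lemma relabel_id: "a \<in> PIstar n \<Longrightarrow> relabel n id a = a"
  unfolding relabel_def map_sum.id id_apply using PIstar_block_subset
  by (simp add: Collect_conj_eq Int_absorb1 cong: image_cong)

lemma relabel_perm_elem:
  assumes \<pi>: "bij_betw \<pi> {1..n} {1..n}" and \<sigma>: "\<sigma> ` {1..n} \<subseteq> {1..n}"
  shows "relabel n \<pi> (perm_elem n \<sigma>) = perm_elem n (\<sigma> \<circ> \<pi>)"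
proof -
  have "relabel n \<pi> (perm_elem n \<sigma>) = (\<lambda>y. {p \<in> carrierX n. map_sum \<pi> id p \<in> {Inl y, Inr (\<sigma> y)}}) ` (\<pi> ` {1..n})"
    unfolding relabel_def perm_elem_def image_image bij_betw_imp_surj_on[OF \<pi>] ..
  also have "\<dots> = (\<lambda>x. {Inl x, Inr (\<sigma> (\<pi> x))}) ` {1..n}"
    unfolding image_image
  proof (rule image_cong)
    fix x assume x: "x \<in> {1..n}"
    have "\<sigma> (\<pi> x) \<in> {1..n}" using x \<sigma> bij_betwE[OF \<pi>] by blast
    show "{p \<in> carrierX n. map_sum \<pi> id p \<in> {Inl (\<pi> x), Inr (\<sigma> (\<pi> x))}} = {Inl x, Inr (\<sigma> (\<pi> x))}"
    proof (rule set_eqI)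
      fix p
      show "p \<in> {p \<in> carrierX n. map_sum \<pi> id p \<in> {Inl (\<pi> x), Inr (\<sigma> (\<pi> x))}} \<longleftrightarrow>
        p \<in> {Inl x, Inr (\<sigma> (\<pi> x))}"
        using x \<open>\<sigma> (\<pi> x) \<in> {1..n}\<close> bij_betw_imp_inj_on[OF \<pi>] by (cases p) (auto dest: inj_onD)
    qed
  qed simp
  finally show ?thesis by (simp add: perm_elem_def)
qed

lemma star_perm_elem:
  "bij_betw \<pi> {1..n} {1..n} \<Longrightarrow> bij_betw \<sigma> {1..n} {1..n} \<Longrightarrow>
    star n (perm_elem n \<pi>) (perm_elem n \<sigma>) = perm_elem n (\<sigma> \<circ> \<pi>)"
  by (simp add: star_perm_elem_left perm_elem_in_PIstar relabel_perm_elem bij_betw_def)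

lemma Sn_star_closed: "a \<in> Sn n \<Longrightarrow> b \<in> Sn n \<Longrightarrow> star n a b \<in> Sn n"
  by (auto simp: Sn_eq star_perm_elem intro: bij_betw_trans)

lemma relabel_in_PIstar: "bij_betw \<pi> {1..n} {1..n} \<Longrightarrow> a \<in> PIstar n \<Longrightarrow> relabel n \<pi> a \<in> PIstar n"
  by (metis star_perm_elem_left star_in_PIstar perm_elem_in_PIstar)

lemma in_Sn_if_tops_separated:
  assumes a: "a \<in> PIstar n"
    and no_top_singleton: "\<And>x. {Inl x} \<notin> a"
    and separated: "\<And>A x y. A \<in> a \<Longrightarrow> Inl x \<in> A \<Longrightarrow> Inl y \<in> A \<Longrightarrow> x = y"
  shows "a \<in> Sn n"
proof -
  have "\<exists>j. \<exists>A\<in>a. Inl x \<in> A \<and> Inr j \<in> A" if "x \<in> {1..n}" for x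
    by (rule PIstar_block_of_nonsingleton[OF a, of "Inl x"]) (use that no_top_singleton in auto)
  then obtain f where f: "\<And>x. x \<in> {1..n} \<Longrightarrow> \<exists>A\<in>a. Inl x \<in> A \<and> Inr (f x) \<in> A"
    by metis
  have same_block: "x = y"
    if A: "A \<in> a" "Inl x \<in> A" "Inr (f y) \<in> A" and y: "y \<in> {1..n}" for A x y
  proof -
    obtain B where "B \<in> a" "Inl y \<in> B" "Inr (f y) \<in> B" using f[OF y] by blast
    with A show ?thesis using PIstar_block_unique[OF a] separated by metis
  qed
  have "inj_on f {1..n}" by (rule inj_onI) (use f same_block in metis)
  moreover have "f ` {1..n} \<subseteq> {1..n}" using f PIstar_block_subset[OF a] by fastforce
  ultimately have bij: "bij_betw f {1..n} {1..n}"
    using endo_inj_surj[of "{1..n}" f] by (simp add: bij_betw_def)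
  have "{Inl x, Inr (f x)} \<in> a" if x: "x \<in> {1..n}" for x
  proof -
    obtain A where A: "A \<in> a" "Inl x \<in> A" "Inr (f x) \<in> A" using f[OF x] by blast
    have "p \<in> {Inl x, Inr (f x)}" if p: "p \<in> A" for p
    proof (cases p)
      case (Inl y)
      then show ?thesis using separated[OF A(1,2)] p by simp
    next
      case (Inr j)
      then have "j \<in> f ` {1..n}" using PIstar_block_subset[OF a A(1)] p bij_betw_imp_surj_on[OF bij] by auto
      then show ?thesis using same_block[OF A(1,2)] p Inr by auto
    qed
    then have "A = {Inl x, Inr (f x)}" using A(2,3) by blast
    then show ?thesis using A(1) by simp
  qed
  then have "perm_elem n f \<subseteq> a" by (auto simp: perm_elem_def)
  then have "a = perm_elem n f" using PIstar_subset_eq[OF a perm_elem_in_PIstar[OF bij]] by simp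
  then show ?thesis using bij by (auto simp: Sn_eq)
qed

lemma star_in_Sn_imp_left:
  assumes \<alpha>: "\<alpha> \<in> PIstar n" and \<beta>: "\<beta> \<in> PIstar n" and unit: "star n \<alpha> \<beta> \<in> Sn n"
  shows "\<alpha> \<in> Sn n"
proof -
  have good: "\<not> badpt \<alpha> \<beta> (Inl x)" if "x \<in> {1..n}" for x
  proof
    assume "badpt \<alpha> \<beta> (Inl x)"
    then have "{Inl x} \<in> star n \<alpha> \<beta>"
      using that unfolding star_eq_image_star_block star_block_def by force
    then show False using Sn_singleton_free[OF unit] by blast
  qed
  show ?thesis
  proof (rule in_Sn_if_tops_separated[OF \<alpha>])
    fix x show "{Inl x} \<notin> \<alpha>"
      using good badpt_liftTopI[of "Inl x" \<alpha> "Inl x" \<beta>] PIstar_block_subset[OF \<alpha>] by fastforce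
  next
    fix A x y assume A: "A \<in> \<alpha>" "Inl x \<in> A" "Inl y \<in> A"
    then have xy: "x \<in> {1..n}" "y \<in> {1..n}" using PIstar_block_subset[OF \<alpha> A(1)] by auto
    have "(outer (Inl x), outer (Inl y)) \<in> simrel \<alpha> \<beta>" using simrel_liftTop[OF A, of \<beta>] by simp
    then have "Inl y \<in> star_block n \<alpha> \<beta> (Inl x)" using in_star_blockI[OF good] xy by simp
    moreover have "Inl x \<in> star_block n \<alpha> \<beta> (Inl x)" using self_in_star_block xy by simp
    moreover have "star_block n \<alpha> \<beta> (Inl x) \<in> star n \<alpha> \<beta>" using xy by (simp add: star_eq_image_star_block)
    ultimately show "x = y" using Sn_block_top_unique[OF unit] by blast
  qed
qed

subsection \<open>Reducing the number of lines\<close>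

definition lines :: "pt set set \<Rightarrow> pt set set" where
  "lines a = {A \<in> a. \<nexists>x. A = {x}}"

lemma finite_lines: "a \<in> PIstar n \<Longrightarrow> finite (lines a)"
  using finite_PIstar by (simp add: lines_def)

lemma line_of_star_block:
  assumes "Q \<in> lines (star n \<alpha> \<beta>)" "v \<in> Q"
  shows "star_block n \<alpha> \<beta> v = Q" and "\<not> badpt \<alpha> \<beta> v"
proof -
  have Q: "Q \<in> star n \<alpha> \<beta>" "\<nexists>x. Q = {x}" using assms(1) by (auto simp: lines_def)
  then obtain u where "Q = star_block n \<alpha> \<beta> u" unfolding star_eq_image_star_block by blast
  then show eq: "star_block n \<alpha> \<beta> v = Q" using star_block_eq assms(2) by blast
  show "\<not> badpt \<alpha> \<beta> v"
  proof
    assume "badpt \<alpha> \<beta> v"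
    then have "Q = {v}" using eq by (simp add: star_block_def)
    then show False using Q(2) by blast
  qed
qed

lemma block_through_line_of_star:
  assumes \<alpha>: "\<alpha> \<in> PIstar n" and Q: "Q \<in> lines (star n \<alpha> \<beta>)"
    and A: "A \<in> \<alpha>" "Inl y \<in> A" "Inl y \<in> Q"
  shows "A \<in> lines \<alpha>" and "A \<inter> range Inl \<subseteq> Q"
proof -
  note good = line_of_star_block[OF Q A(3)]
  show "A \<inter> range Inl \<subseteq> Q"
  proof
    fix p assume p: "p \<in> A \<inter> range Inl"
    then have "(outer (Inl y), outer p) \<in> simrel \<alpha> \<beta>"
      using simrel_liftTop[OF A(1,2), of p \<beta>] by (auto elim: outer.elims)
    moreover have "p \<in> carrierX n" using PIstar_block_subset[OF \<alpha> A(1)] p by blast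
    ultimately show "p \<in> Q" using in_star_blockI[OF good(2)] good(1) by blast
  qed
  have "A \<noteq> {Inl y}" using badpt_liftTopI[of "Inl y" \<alpha> "Inl y" \<beta>] good(2) A(1) by auto
  then show "A \<in> lines \<alpha>" using A by (auto simp: lines_def)
qed

text \<open>If a top point of a line \<open>L\<close> of \<open>\<alpha>\<close> becomes a point of \<open>\<alpha> \<star> \<beta>\<close>, then choosing for every
  line of \<open>\<alpha> \<star> \<beta>\<close> the block of \<open>\<alpha>\<close> through one of its top points injects the lines of
  \<open>\<alpha> \<star> \<beta>\<close> into the lines of \<open>\<alpha>\<close> other than \<open>L\<close>.\<close>

lemma card_lines_star_less:
  assumes \<alpha>: "\<alpha> \<in> PIstar n" and \<beta>: "\<beta> \<in> PIstar n"
    and L: "L \<in> lines \<alpha>" and x0: "Inl x0 \<in> L" and bad: "badpt \<alpha> \<beta> (Inl x0)"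
  shows "card (lines (star n \<alpha> \<beta>)) < card (lines \<alpha>)"
proof -
  have "\<exists>A y. A \<in> \<alpha> \<and> Inl y \<in> A \<and> Inl y \<in> Q" if Q: "Q \<in> lines (star n \<alpha> \<beta>)" for Q
  proof -
    have "Q \<in> star n \<alpha> \<beta>" "\<nexists>x. Q = {x}" using Q by (auto simp: lines_def)
    then obtain y j where y: "Inl y \<in> Q" "Inr j \<in> Q" using PIstar_line[OF star_in_PIstar[OF \<alpha> \<beta>]] by metis
    then have "Inl y \<in> carrierX n"
      using PIstar_block_subset[OF star_in_PIstar[OF \<alpha> \<beta>] \<open>Q \<in> star n \<alpha> \<beta>\<close>] by blast
    then show ?thesis using PIstar_cover[OF \<alpha>] y(1) by blast
  qed
  then obtain f where f: "\<And>Q. Q \<in> lines (star n \<alpha> \<beta>) \<Longrightarrow> \<exists>y. f Q \<in> \<alpha> \<and> Inl y \<in> f Q \<and> Inl y \<in> Q"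
    by metis
  have "f Q \<in> lines \<alpha> - {L}" if Q: "Q \<in> lines (star n \<alpha> \<beta>)" for Q
  proof -
    obtain y where y: "f Q \<in> \<alpha>" "Inl y \<in> f Q" "Inl y \<in> Q" using f[OF Q] by blast
    have "f Q \<noteq> L"
      using block_through_line_of_star(2)[OF \<alpha> Q y] line_of_star_block(2)[OF Q] x0 bad by blast
    then show ?thesis using block_through_line_of_star(1)[OF \<alpha> Q y] by blast
  qed
  moreover have "inj_on f (lines (star n \<alpha> \<beta>))"
  proof (rule inj_onI)
    fix Q Q' assume Q: "Q \<in> lines (star n \<alpha> \<beta>)" and Q': "Q' \<in> lines (star n \<alpha> \<beta>)" and eq: "f Q = f Q'"
    obtain y where y: "f Q \<in> \<alpha>" "Inl y \<in> f Q" "Inl y \<in> Q" using f[OF Q] by blast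
    obtain y' where y': "Inl y' \<in> f Q'" "Inl y' \<in> Q'" using f[OF Q'] by blast
    have "Inl y' \<in> Q" using block_through_line_of_star(2)[OF \<alpha> Q y] y'(1) eq by blast
    then show "Q = Q'"
      using PIstar_block_unique[OF star_in_PIstar[OF \<alpha> \<beta>]] Q Q' y'(2) by (auto simp: lines_def)
  qed
  ultimately have "card (lines (star n \<alpha> \<beta>)) \<le> card (lines \<alpha> - {L})"
    using finite_lines[OF \<alpha>] by (intro card_inj_on_le) auto
  also have "\<dots> < card (lines \<alpha>)"
    using finite_lines[OF \<alpha>] L by (rule card_Diff1_less)
  finally show ?thesis .
qed

lemma card_lines_image_le:
  assumes "finite a" and "\<And>j. j \<notin> m ` a \<Longrightarrow> \<exists>x. F j = {x}"
  shows "card (lines (F ` S)) \<le> card a"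
proof -
  have "lines (F ` S) \<subseteq> F ` m ` a" unfolding lines_def using assms(2) by blast
  then have "card (lines (F ` S)) \<le> card (F ` m ` a)" using assms(1) by (simp add: card_mono)
  also have "\<dots> \<le> card a" using assms(1) by (meson card_image_le finite_imageI le_trans)
  finally show ?thesis .
qed

text \<open>Given a label \<open>m L \<in> {1..n}\<close> for every block \<open>L\<close> of \<open>a\<close>, the upper factor joins the
  top points of the blocks labelled \<open>j\<close> to the bottom point \<open>j'\<close>, and the lower factor joins
  the top point \<open>j\<close> to their bottom points.  When \<open>m L\<close> is a top point of \<open>L\<close> for every \<open>L\<close>,
  their product is \<open>a\<close>.\<close>

definition upper_factor :: "nat \<Rightarrow> pt set set \<Rightarrow> (pt set \<Rightarrow> nat) \<Rightarrow> pt set set" where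
  "upper_factor n a m = (\<lambda>j. insert (Inr j) (\<Union>L\<in>{L \<in> a. m L = j}. L \<inter> range Inl)) ` {1..n}"

definition lower_factor :: "nat \<Rightarrow> pt set set \<Rightarrow> (pt set \<Rightarrow> nat) \<Rightarrow> pt set set" where
  "lower_factor n a m = (\<lambda>j. insert (Inl j) (\<Union>L\<in>{L \<in> a. m L = j}. L \<inter> range Inr)) ` {1..n}"

lemma upper_factor_in_PIstar:
  assumes a: "a \<in> PIstar n" and m: "\<And>L. L \<in> a \<Longrightarrow> m L \<in> {1..n}"
  shows "upper_factor n a m \<in> PIstar n"
proof (rule PIstarI)
  fix A assume "A \<in> upper_factor n a m"
  then show "A \<noteq> {} \<and> A \<subseteq> carrierX n"
    using PIstar_block_subset[OF a] unfolding upper_factor_def by auto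
next
  fix p assume p: "p \<in> carrierX n"
  then obtain L where L: "L \<in> a" "p \<in> L" using PIstar_cover[OF a] by blast
  show "\<exists>A\<in>upper_factor n a m. p \<in> A"
  proof (cases p)
    case (Inl x)
    with L have "p \<in> insert (Inr (m L)) (\<Union>L'\<in>{L' \<in> a. m L' = m L}. L' \<inter> range Inl)" by blast
    then show ?thesis unfolding upper_factor_def by (rule bexI[OF _ imageI[OF m[OF L(1)]]])
  next
    case (Inr j)
    then show ?thesis using p unfolding upper_factor_def by auto
  qed
next
  fix A B p assume "A \<in> upper_factor n a m" "B \<in> upper_factor n a m" "p \<in> A" "p \<in> B"
  then obtain i j where ij: "A = insert (Inr i) (\<Union>L\<in>{L \<in> a. m L = i}. L \<inter> range Inl)"
    "B = insert (Inr j) (\<Union>L\<in>{L \<in> a. m L = j}. L \<inter> range Inl)" "p \<in> A" "p \<in> B"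
    unfolding upper_factor_def by blast
  have "i = j"
  proof (cases p)
    case (Inl x)
    then obtain L L' where "L \<in> a" "m L = i" "p \<in> L" "L' \<in> a" "m L' = j" "p \<in> L'" using ij by auto
    then show ?thesis using PIstar_block_unique[OF a] by metis
  next
    case (Inr k)
    then show ?thesis using ij by auto
  qed
  then show "A = B" using ij by simp
qed (auto simp: upper_factor_def)

lemma lower_factor_in_PIstar:
  assumes a: "a \<in> PIstar n" and m: "\<And>L. L \<in> a \<Longrightarrow> m L \<in> {1..n}"
  shows "lower_factor n a m \<in> PIstar n"
proof (rule PIstarI)
  fix A assume "A \<in> lower_factor n a m"
  then show "A \<noteq> {} \<and> A \<subseteq> carrierX n"
    using PIstar_block_subset[OF a] unfolding lower_factor_def by auto
next
  fix p assume p: "p \<in> carrierX n"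
  then obtain L where L: "L \<in> a" "p \<in> L" using PIstar_cover[OF a] by blast
  show "\<exists>A\<in>lower_factor n a m. p \<in> A"
  proof (cases p)
    case (Inl j)
    then show ?thesis using p unfolding lower_factor_def by auto
  next
    case (Inr k)
    with L have "p \<in> insert (Inl (m L)) (\<Union>L'\<in>{L' \<in> a. m L' = m L}. L' \<inter> range Inr)" by blast
    then show ?thesis unfolding lower_factor_def by (rule bexI[OF _ imageI[OF m[OF L(1)]]])
  qed
next
  fix A B p assume "A \<in> lower_factor n a m" "B \<in> lower_factor n a m" "p \<in> A" "p \<in> B"
  then obtain i j where ij: "A = insert (Inl i) (\<Union>L\<in>{L \<in> a. m L = i}. L \<inter> range Inr)"
    "B = insert (Inl j) (\<Union>L\<in>{L \<in> a. m L = j}. L \<inter> range Inr)" "p \<in> A" "p \<in> B"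
    unfolding lower_factor_def by blast
  have "i = j"
  proof (cases p)
    case (Inl k)
    then show ?thesis using ij by auto
  next
    case (Inr x)
    then obtain L L' where "L \<in> a" "m L = i" "p \<in> L" "L' \<in> a" "m L' = j" "p \<in> L'" using ij by auto
    then show ?thesis using PIstar_block_unique[OF a] by metis
  qed
  then show "A = B" using ij by simp
qed (auto simp: lower_factor_def)

context
  fixes n a m
  assumes a: "a \<in> PIstar n" and singleton_free: "\<And>p. {p} \<notin> a"
    and marked: "\<And>L. L \<in> a \<Longrightarrow> Inl (m L) \<in> L"
begin

lemma mark_in_range: "L \<in> a \<Longrightarrow> m L \<in> {1..n}"
  using marked PIstar_block_subset[OF a] by fastforce

lemma blocks_with_mark:
  assumes L: "L \<in> a"
  shows "{L' \<in> a. m L' = m L} = {L}"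
proof
  show "{L' \<in> a. m L' = m L} \<subseteq> {L}"
  proof
    fix L' assume "L' \<in> {L' \<in> a. m L' = m L}"
    then have "L' \<in> a" "Inl (m L) \<in> L'" using marked by force+
    then show "L' \<in> {L}" using PIstar_block_unique[OF a _ L _ marked[OF L]] by simp
  qed
qed (use L in simp)

lemma star_block_upper_lower_factor:
  assumes L: "L \<in> a" and u: "u \<in> L"
  shows "star_block n (upper_factor n a m) (lower_factor n a m) u = L"
proof -
  let ?P = "insert (Inr (m L)) (L \<inter> range Inl)" and ?Q = "insert (Inl (m L)) (L \<inter> range Inr)"
  have "?P = insert (Inr (m L)) (\<Union>L'\<in>{L' \<in> a. m L' = m L}. L' \<inter> range Inl)"
    using blocks_with_mark[OF L] by simp
  then have P: "?P \<in> upper_factor n a m"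
    unfolding upper_factor_def by (rule image_eqI[OF _ mark_in_range[OF L]])
  have "?Q = insert (Inl (m L)) (\<Union>L'\<in>{L' \<in> a. m L' = m L}. L' \<inter> range Inr)"
    using blocks_with_mark[OF L] by simp
  then have Q: "?Q \<in> lower_factor n a m"
    unfolding lower_factor_def by (rule image_eqI[OF _ mark_in_range[OF L]])
  note glued = star_block_glued[OF upper_factor_in_PIstar[OF a mark_in_range]
      lower_factor_in_PIstar[OF a mark_in_range] Q]
  have u': "u \<in> \<Union>{?P} \<inter> range Inl \<union> ?Q \<inter> range Inr" using u by (cases u) auto
  have "star_block n (upper_factor n a m) (lower_factor n a m) u =
    (if (\<exists>q. ?Q = {q}) \<or> (\<exists>P\<in>{?P}. \<exists>p. P = {p}) then {u} else \<Union>{?P} \<inter> range Inl \<union> ?Q \<inter> range Inr)"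
    by (rule glued) (use P u' in auto)
  moreover obtain j where "Inr j \<in> L" using PIstar_line[OF a L] singleton_free L by metis
  then have "\<nexists>q. ?Q = {q}" by auto
  moreover have "\<nexists>p. ?P = {p}" using marked[OF L] by auto
  moreover have "?P \<inter> range Inl \<union> ?Q \<inter> range Inr = L"
  proof (rule set_eqI)
    fix v show "v \<in> ?P \<inter> range Inl \<union> ?Q \<inter> range Inr \<longleftrightarrow> v \<in> L"
      using marked[OF L] by (cases v) auto
  qed
  ultimately show ?thesis by simp
qed

lemma star_upper_lower_factor: "star n (upper_factor n a m) (lower_factor n a m) = a"
proof
  show "star n (upper_factor n a m) (lower_factor n a m) \<subseteq> a"
  proof
    fix B assume "B \<in> star n (upper_factor n a m) (lower_factor n a m)"
    then obtain u where u: "u \<in> carrierX n" "B = star_block n (upper_factor n a m) (lower_factor n a m) u"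
      unfolding star_eq_image_star_block by blast
    then obtain L where "L \<in> a" "u \<in> L" using PIstar_cover[OF a] by blast
    then show "B \<in> a" using star_block_upper_lower_factor u(2) by simp
  qed
next
  show "a \<subseteq> star n (upper_factor n a m) (lower_factor n a m)"
  proof
    fix L assume L: "L \<in> a"
    then obtain u where u: "u \<in> L" using PIstar_block_nonempty[OF a] by blast
    then have "u \<in> carrierX n" using PIstar_block_subset[OF a L] by blast
    then show "L \<in> star n (upper_factor n a m) (lower_factor n a m)"
      using star_block_upper_lower_factor[OF L u] unfolding star_eq_image_star_block by force
  qed
qed

lemma card_lines_upper_factor: "card (lines (upper_factor n a m)) \<le> card (lines a)"
proof -
  have "card (lines (upper_factor n a m)) \<le> card a"
    unfolding upper_factor_def by (rule card_lines_image_le[OF finite_PIstar[OF a]]) auto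
  moreover have "lines a = a" using singleton_free by (auto simp: lines_def)
  ultimately show ?thesis by simp
qed

lemma card_lines_lower_factor: "card (lines (lower_factor n a m)) \<le> card (lines a)"
proof -
  have "card (lines (lower_factor n a m)) \<le> card a"
    unfolding lower_factor_def by (rule card_lines_image_le[OF finite_PIstar[OF a]]) auto
  moreover have "lines a = a" using singleton_free by (auto simp: lines_def)
  ultimately show ?thesis by simp
qed

lemma exists_unmarked_if_nonunit:
  assumes nonunit: "a \<notin> Sn n"
  shows "\<exists>j\<in>{1..n}. j \<notin> m ` a"
proof (rule ccontr)
  assume "\<not> (\<exists>j\<in>{1..n}. j \<notin> m ` a)"
  then have all_marked: "x \<in> m ` a" if "x \<in> {1..n}" for x using that by blast
  have "x = m A" if A: "A \<in> a" "Inl x \<in> A" for A x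
  proof -
    have "x \<in> {1..n}" using PIstar_block_subset[OF a A(1)] A(2) by auto
    then obtain L where L: "L \<in> a" "x = m L" using all_marked by blast
    then have "L = A" using PIstar_block_unique[OF a L(1) A(1) marked[OF L(1)]] A(2) by simp
    then show ?thesis using L(2) by simp
  qed
  then have "a \<in> Sn n" by (metis in_Sn_if_tops_separated[OF a singleton_free])
  with nonunit show False ..
qed

end

lemma singleton_free_nonunit_factor:
  assumes a: "a \<in> PIstar n" and singleton_free: "\<And>p. {p} \<notin> a" and nonunit: "a \<notin> Sn n"
  obtains b c where "b \<in> PIstar n" "c \<in> PIstar n" "star n b c = a" "\<exists>s. {s} \<in> b" "\<exists>s. {s} \<in> c"
    "card (lines b) \<le> card (lines a)" "card (lines c) \<le> card (lines a)"
proof -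
  have "\<exists>x. Inl x \<in> L" if "L \<in> a" for L
    by (rule PIstar_line[OF a that]) (use singleton_free that in auto)
  then obtain m where marked: "\<And>L. L \<in> a \<Longrightarrow> Inl (m L) \<in> L" by metis
  note m_range = mark_in_range[OF a singleton_free marked]
  note factors = upper_factor_in_PIstar[OF a m_range] lower_factor_in_PIstar[OF a m_range]
    star_upper_lower_factor[OF a singleton_free marked]
    card_lines_upper_factor[OF a singleton_free marked] card_lines_lower_factor[OF a singleton_free marked]
  obtain j where j: "j \<in> {1..n}" "j \<notin> m ` a"
    using exists_unmarked_if_nonunit[OF a singleton_free marked nonunit] by blast
  then have no_block: "{L \<in> a. m L = j} = {}" by blast
  have "{Inr j} \<in> upper_factor n a m"
    unfolding upper_factor_def by (rule image_eqI[OF _ j(1)]) (simp add: no_block)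
  moreover have "{Inl j} \<in> lower_factor n a m"
    unfolding lower_factor_def by (rule image_eqI[OF _ j(1)]) (simp add: no_block)
  ultimately show thesis by (intro that[OF factors(1-3) _ _ factors(4,5)]) blast+
qed

lemma exists_bij_betw_two_points:
  assumes "a \<in> S" "b \<in> S" "c \<in> S" "d \<in> S" "a \<noteq> b" "c \<noteq> d"
  shows "\<exists>\<pi>. bij_betw \<pi> S S \<and> \<pi> a = c \<and> \<pi> b = d"
proof -
  let ?\<tau> = "Transposition.transpose a c"
  let ?\<sigma> = "Transposition.transpose (?\<tau> b) d"
  have "?\<tau> b \<in> S" "?\<tau> b \<noteq> c" using assms by (auto simp: Transposition.transpose_def)
  then have "bij_betw (?\<sigma> \<circ> ?\<tau>) S S" "(?\<sigma> \<circ> ?\<tau>) a = c" "(?\<sigma> \<circ> ?\<tau>) b = d"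
    using assms by (auto intro!: bij_betw_trans[of _ S S] simp: transpose_eq_iff)
  then show ?thesis by blast
qed

text \<open>A nonunit \<open>b\<close> with a point has a relabelling \<open>c\<close> such that a given top point of a line
  of \<open>b\<close> becomes a point of \<open>b \<star> c\<close>: either a top point of \<open>b\<close> that is a point is moved under
  the line, or two top points of one block of \<open>b\<close> are moved under the line and under a bottom
  point of \<open>b\<close> that is a point.\<close>

lemma relabel_isolates_top:
  assumes b: "b \<in> PIstar n" and nonunit: "b \<notin> Sn n" and s: "{s} \<in> b"
    and L: "L \<in> lines b" and x: "Inl x \<in> L"
  shows "\<exists>\<pi>. bij_betw \<pi> {1..n} {1..n} \<and> badpt b (relabel n \<pi> b) (Inl x)"
proof -
  have Lb: "L \<in> b" and L_line: "\<nexists>p. L = {p}" using L by (auto simp: lines_def)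
  obtain j0 where j0: "Inr j0 \<in> L" using PIstar_line[OF b Lb L_line] by metis
  have j0_range: "j0 \<in> {1..n}" using PIstar_block_subset[OF b Lb] j0 by auto
  have to_middle: "(outer (Inl x), Md j0) \<in> simrel b c" for c using simrel_liftTop[OF Lb x j0] by simp
  show ?thesis
  proof (cases "\<exists>t. {Inl t} \<in> b")
    case True
    then obtain t where t: "{Inl t} \<in> b" by blast
    then have "t \<in> {1..n}" using PIstar_block_subset[OF b t] by simp
    then have bij: "bij_betw (Transposition.transpose j0 t) {1..n} {1..n}" using j0_range by simp
    have "{Inl j0} \<in> relabel n (Transposition.transpose j0 t) b"
      using singleton_top_in_relabel[OF _ bij j0_range] t by simp
    then have "badpt b (relabel n (Transposition.transpose j0 t) b) (Inl x)"
      using badpt_liftBotI to_middle by fastforce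
    then show ?thesis using bij by blast
  next
    case False
    then obtain s' where s': "s = Inr s'" using s by (cases s) auto
    have s'_range: "s' \<in> {1..n}" using PIstar_block_subset[OF b s] s' by auto
    have "s' \<noteq> j0" using PIstar_block_unique[OF b Lb s j0] s' L_line by auto
    obtain A x1 x2 where A: "A \<in> b" "Inl x1 \<in> A" "Inl x2 \<in> A" "x1 \<noteq> x2"
      using in_Sn_if_tops_separated[OF b] False nonunit by metis
    have "x1 \<in> {1..n}" "x2 \<in> {1..n}" using PIstar_block_subset[OF b A(1)] A(2,3) by auto
    then obtain \<pi> where \<pi>: "bij_betw \<pi> {1..n} {1..n}" "\<pi> j0 = x1" "\<pi> s' = x2"
      using exists_bij_betw_two_points[OF j0_range s'_range] \<open>s' \<noteq> j0\<close> A(4) by metis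
    have "(liftBot (Inl j0), liftBot (Inl s')) \<in> simrel b (relabel n \<pi> b)"
      by (rule simrel_liftBot[OF relabel_block[OF A(1)]]) (use j0_range s'_range \<pi> A(2,3) in auto)
    then have "(outer (Inl x), liftTop s) \<in> simrel b (relabel n \<pi> b)"
      using simrel_trans[OF to_middle] s' by simp
    then have "badpt b (relabel n \<pi> b) (Inl x)" by (rule badpt_liftTopI[OF s])
    then show ?thesis using \<pi>(1) by blast
  qed
qed

subsection \<open>Star-closed bipartitions of \<open>PIstar n\<close>\<close>

definition star_closed :: "nat \<Rightarrow> pt set set set \<Rightarrow> bool" where
  "star_closed n X \<longleftrightarrow> (\<forall>a\<in>X. \<forall>b\<in>X. star n a b \<in> X)"

definition discrete :: "nat \<Rightarrow> pt set set" where
  "discrete n = (\<lambda>p. {p}) ` carrierX n"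

lemma discrete_in_PIstar: "discrete n \<in> PIstar n"
  unfolding discrete_def by (rule PIstarI) auto

lemma discrete_notin_Sn: "n \<ge> 1 \<Longrightarrow> discrete n \<notin> Sn n"
  using Sn_singleton_free[of "discrete n" n "Inl 1"] by (auto simp: discrete_def)

lemma eq_discrete_if_no_lines: "a \<in> PIstar n \<Longrightarrow> lines a = {} \<Longrightarrow> a = discrete n"
  unfolding discrete_def lines_def
  by (auto 0 3 dest: PIstar_block_subset PIstar_cover intro: rev_image_eqI)

lemma perm_elem_eq_permutes:
  assumes "bij_betw \<pi> {1..n} {1..n}"
  obtains \<pi>' where "\<pi>' permutes {1..n}" "perm_elem n \<pi> = perm_elem n \<pi>'"
proof
  let ?\<pi>' = "\<lambda>x. if x \<in> {1..n} then \<pi> x else x"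
  have "bij_betw ?\<pi>' {1..n} {1..n}" using assms by (rule bij_betw_cong[THEN iffD1, rotated]) simp
  then show "?\<pi>' permutes {1..n}" by (rule bij_imp_permutes) auto
  show "perm_elem n \<pi> = perm_elem n ?\<pi>'" by (rule perm_elem_cong) simp
qed

lemma star_perm_elem_inv_relabel:
  assumes \<pi>: "bij_betw \<pi> {1..n} {1..n}" and a: "a \<in> PIstar n"
  shows "star n (perm_elem n (inv_into {1..n} \<pi>)) (relabel n \<pi> a) = a"
proof -
  let ?\<sigma> = "inv_into {1..n} \<pi>"
  have \<sigma>: "bij_betw ?\<sigma> {1..n} {1..n}" by (rule bij_betw_inv_into[OF \<pi>])
  have "star n (perm_elem n ?\<sigma>) (relabel n \<pi> a) = relabel n ?\<sigma> (relabel n \<pi> a)"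
    using star_perm_elem_left[OF \<sigma> relabel_in_PIstar[OF \<pi> a]] .
  also have "\<dots> = relabel n (\<pi> \<circ> ?\<sigma>) a" using bij_betw_imp_surj_on[OF \<sigma>] by (simp add: relabel_comp)
  also have "\<dots> = relabel n id a"
  proof (rule relabel_cong)
    fix x assume "x \<in> {1..n}"
    then show "(\<pi> \<circ> ?\<sigma>) x = id x" using bij_betw_inv_into_right[OF \<pi>] by simp
  qed
  also have "\<dots> = a" using a by (rule relabel_id)
  finally show ?thesis .
qed

locale star_bipartition =
  fixes n :: nat and X Y :: "pt set set set"
  assumes closed_X: "star_closed n X" and closed_Y: "star_closed n Y"
    and cover: "X \<union> Y = PIstar n" and disjoint: "X \<inter> Y = {}"
begin

lemma swap: "star_bipartition n Y X"
  using closed_X closed_Y cover disjoint by unfold_locales blast+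

lemma star_in_X: "a \<in> X \<Longrightarrow> b \<in> X \<Longrightarrow> star n a b \<in> X"
  using closed_X by (simp add: star_closed_def)

lemma star_in_Y: "a \<in> Y \<Longrightarrow> b \<in> Y \<Longrightarrow> star n a b \<in> Y"
  using closed_Y by (simp add: star_closed_def)

lemma Sn_subset_X_if_identity:
  assumes e: "perm_elem n id \<in> X"
  shows "Sn n \<subseteq> X"
proof
  fix u assume "u \<in> Sn n"
  then obtain \<pi> where "bij_betw \<pi> {1..n} {1..n}" "u = perm_elem n \<pi>" by (auto simp: Sn_eq)
  then obtain \<pi>' where \<pi>': "\<pi>' permutes {1..n}" and u: "u = perm_elem n \<pi>'"
    by (metis perm_elem_eq_permutes)
  have "perm_elem n \<pi>' \<in> X"
    using \<pi>' finite_atLeastAtMost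
  proof (induction rule: permutes_induct)
    case id
    then show ?case using e by (simp add: id_def)
  next
    case (swap i j p)
    let ?t = "Transposition.transpose i j"
    have t: "bij_betw ?t {1..n} {1..n}" using swap.hyps(1,2) by simp
    have p: "bij_betw p {1..n} {1..n}" using swap.hyps(4) by (rule permutes_imp_bij)
    have "perm_elem n ?t \<notin> Y"
    proof
      assume "perm_elem n ?t \<in> Y"
      then have "perm_elem n id \<in> Y" using star_in_Y star_perm_elem[OF t t] by force
      then show False using e disjoint by blast
    qed
    then have "perm_elem n ?t \<in> X" using cover perm_elem_in_PIstar[OF t] by blast
    then have "star n (perm_elem n p) (perm_elem n ?t) \<in> X" using swap.IH star_in_X by blast
    then show ?case using star_perm_elem[OF p t] by (simp add: comp_def)
  qed
  then show "u \<in> X" using u by simp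
qed

lemma Sn_on_one_side: "Sn n \<subseteq> X \<or> Sn n \<subseteq> Y"
proof -
  interpret swapped: star_bipartition n Y X by (rule swap)
  have "perm_elem n id \<in> X \<union> Y" using cover perm_elem_in_PIstar[of id n] by simp
  then show ?thesis using Sn_subset_X_if_identity swapped.Sn_subset_X_if_identity by blast
qed

lemma relabel_in_Y:
  assumes a: "a \<in> Y" and \<pi>: "bij_betw \<pi> {1..n} {1..n}"
  shows "relabel n \<pi> a \<in> Y"
proof -
  have aP: "a \<in> PIstar n" using a cover by blast
  show ?thesis
  proof (cases "Sn n \<subseteq> Y")
    case True
    then have "star n (perm_elem n \<pi>) a \<in> Y" using perm_elem_in_Sn[OF \<pi>] a star_in_Y by blast
    then show ?thesis using star_perm_elem_left[OF \<pi> aP] by simp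
  next
    case False
    then have "perm_elem n (inv_into {1..n} \<pi>) \<in> X"
      using Sn_on_one_side perm_elem_in_Sn[OF bij_betw_inv_into[OF \<pi>]] by blast
    moreover have "relabel n \<pi> a \<in> X" if "relabel n \<pi> a \<notin> Y"
      using that cover relabel_in_PIstar[OF \<pi> aP] by blast
    ultimately show ?thesis
      using star_in_X star_perm_elem_inv_relabel[OF \<pi> aP] a disjoint by force
  qed
qed

lemma nonunit_with_point_in_X:
  assumes discrete: "discrete n \<in> X"
    and fewer_lines: "\<And>c. c \<in> PIstar n - Sn n \<Longrightarrow> card (lines c) < card (lines b) \<Longrightarrow> c \<in> X"
    and b: "b \<in> PIstar n - Sn n" and s: "{s} \<in> b"
  shows "b \<in> X"
proof (rule ccontr)
  assume "b \<notin> X"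
  then have bY: "b \<in> Y" using b cover by blast
  have "lines b \<noteq> {}" using eq_discrete_if_no_lines b discrete \<open>b \<notin> X\<close> by blast
  then obtain L where L: "L \<in> lines b" by blast
  then obtain x j where "Inl x \<in> L" "Inr j \<in> L" using PIstar_line[of b n L] b by (auto simp: lines_def)
  then obtain \<pi> where \<pi>: "bij_betw \<pi> {1..n} {1..n}" and bad: "badpt b (relabel n \<pi> b) (Inl x)"
    using relabel_isolates_top b s L by blast
  let ?c = "relabel n \<pi> b"
  have cP: "?c \<in> PIstar n" using relabel_in_PIstar[OF \<pi>] b by blast
  have "star n b ?c \<in> PIstar n - Sn n"
    using star_in_PIstar[OF _ cP] star_in_Sn_imp_left[OF _ cP] b by blast
  moreover have "card (lines (star n b ?c)) < card (lines b)"
    using card_lines_star_less[OF _ cP L \<open>Inl x \<in> L\<close> bad] b by blast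
  ultimately have "star n b ?c \<in> X" by (rule fewer_lines)
  moreover have "star n b ?c \<in> Y" using star_in_Y[OF bY relabel_in_Y[OF bY \<pi>]] .
  ultimately show False using disjoint by blast
qed

lemma nonunits_subset_X:
  assumes discrete: "discrete n \<in> X"
  shows "PIstar n - Sn n \<subseteq> X"
proof
  fix a assume "a \<in> PIstar n - Sn n"
  then show "a \<in> X"
  proof (induction "card (lines a)" arbitrary: a rule: less_induct)
    case less
    show ?case
    proof (cases "\<exists>s. {s} \<in> a")
      case True
      then show ?thesis using nonunit_with_point_in_X[OF discrete] less by blast
    next
      case False
      then have singleton_free: "\<And>p. {p} \<notin> a" by blast
      obtain b c where bc: "b \<in> PIstar n" "c \<in> PIstar n" "star n b c = a"
        "\<exists>s. {s} \<in> b" "\<exists>s. {s} \<in> c" "card (lines b) \<le> card (lines a)" "card (lines c) \<le> card (lines a)"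
        using singleton_free_nonunit_factor[OF _ singleton_free] less.prems by blast
      have "d \<in> X" if d: "d \<in> PIstar n" "{s} \<in> d" "card (lines d) \<le> card (lines a)" for d s
      proof (rule nonunit_with_point_in_X[OF discrete _ _ d(2)])
        show "d \<in> PIstar n - Sn n" using d(1,2) Sn_singleton_free by blast
        show "e \<in> X" if "e \<in> PIstar n - Sn n" "card (lines e) < card (lines d)" for e
          using less.hyps that d(3) by simp
      qed
      then have "b \<in> X" "c \<in> X" using bc by blast+
      then show ?thesis using star_in_X bc(3) by blast
    qed
  qed
qed

lemma eq_if_discrete_in_X:
  assumes discrete: "discrete n \<in> X" and nonempty: "Y \<noteq> {}"
  shows "X = PIstar n - Sn n" and "Y = Sn n"
proof -
  have nonunits: "PIstar n - Sn n \<subseteq> X" using nonunits_subset_X[OF discrete] .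
  have "Sn n \<subseteq> Y"
  proof (rule ccontr)
    assume "\<not> Sn n \<subseteq> Y"
    then have "PIstar n \<subseteq> X" using Sn_on_one_side nonunits by blast
    then show False using nonempty cover disjoint by blast
  qed
  then show "X = PIstar n - Sn n" "Y = Sn n" using nonunits cover disjoint Sn_subset_PIstar by blast+
qed

end

lemma completely_isolated_cases:
  assumes T: "completely_isolated (PIstar n) (star n) T"
  shows "T = PIstar n \<or> T = Sn n \<or> T = PIstar n - Sn n"
proof (cases "T = PIstar n")
  case False
  have TP: "T \<subseteq> PIstar n" and T_ne: "T \<noteq> {}" using T by (auto simp: completely_isolated_def)
  interpret star_bipartition n T "PIstar n - T"
    using T star_in_PIstar by unfold_locales (auto simp: completely_isolated_def star_closed_def)
  interpret swapped: star_bipartition n "PIstar n - T" T by (rule swap)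
  have "PIstar n - T \<noteq> {}" using False TP by blast
  then show ?thesis
    using eq_if_discrete_in_X swapped.eq_if_discrete_in_X T_ne discrete_in_PIstar
    by (cases "discrete n \<in> T") auto
qed simp

lemma completely_isolated_PIstar: "completely_isolated (PIstar n) (star n) (PIstar n)"
  using perm_elem_in_PIstar[of id n] star_in_PIstar by (auto simp: completely_isolated_def)

lemma completely_isolated_Sn: "completely_isolated (PIstar n) (star n) (Sn n)"
  unfolding completely_isolated_def
  using perm_elem_in_Sn[of id n] Sn_subset_PIstar Sn_star_closed star_in_Sn_imp_left by blast

lemma completely_isolated_nonunits:
  "n \<ge> 1 \<Longrightarrow> completely_isolated (PIstar n) (star n) (PIstar n - Sn n)"
  using discrete_in_PIstar discrete_notin_Sn star_in_PIstar star_in_Sn_imp_left Sn_star_closed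
  unfolding completely_isolated_def by blast

theorem mainTheorem9:
  fixes n :: nat
  assumes "n \<ge> 2"
  shows "{U. completely_isolated (PIstar n) (star n) U} = {PIstar n, Sn n, PIstar n - Sn n}"
  using completely_isolated_cases completely_isolated_PIstar completely_isolated_Sn
    completely_isolated_nonunits[of n] assms by auto

end
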